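(* Let $n\equiv 0 \pmod 4$ with $n\ge 8$, and suppose there exists a reverse Gray code for the permutations of $\{1,\ldots,n-3\}$. Then there exists a reverse Gray code $\pi_0,\ldots,\pi_{n!-1}$ for the permutations of $\{1,\ldots,n\}$ with property $P$.
   Context: A reverse Gray code for the permutations of $\{1,\ldots,m\}$ is a listing $\pi_0,\ldots,\pi_{m!-1}$ of all permutations of $\{1,\ldots,m\}$ written as words, such that consecutive permutations differ by interchanging the symbols in two adjacent positions, and $\pi_{i+m!/2}$ is the reversal of $\pi_i$ (the word read backwards) for all $0\le i<m!/2$. Such a code has property $P$ if $\pi_0=12\cdots m$ (so $\pi_{m!/2}=m(m-1)\cdots 21$) and the four permutations immediately preceding $\pi_{m!/2}$ are, in order, $\pi_{m!/2-4}=(m-1)(m-2)(m-3)\,m\,(m-4)\cdots 3\,1\,2$, $\pi_{m!/2-3}=(m-1)(m-2)\,m\,(m-3)(m-4)\cdots 3\,1\,2$, $\pi_{m!/2-2}=(m-1)\,m\,(m-2)(m-3)(m-4)\cdots 3\,1\,2$, $\pi_{m!/2-1}=m(m-1)(m-2)(m-3)(m-4)\cdots 3\,1\,2$; i.e. the symbols $1,\ldots,m-1$ appear in the order $(m-1)(m-2)\cdots 3\,1\,2$ and the symbol $m$ moves from the fourth position to the first. *)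

theory Defs
  imports Main
begin

definition is_perm_word :: "nat \<Rightarrow> nat list \<Rightarrow> bool" where
  "is_perm_word m w \<longleftrightarrow> distinct w \<and> set w = {1..m}"

definition adj_transp :: "nat list \<Rightarrow> nat list \<Rightarrow> bool" where
  "adj_transp w v \<longleftrightarrow> (\<exists>i. Suc i < length w \<and>
      v = w[i := w ! Suc i, Suc i := w ! i])"

definition reverse_gray_code :: "nat \<Rightarrow> nat list list \<Rightarrow> bool" where
  "reverse_gray_code m L \<longleftrightarrow>
     length L = fact m \<and> distinct L \<and> (\<forall>w \<in> set L. is_perm_word m w) \<and>
     (\<forall>w. is_perm_word m w \<longrightarrow> w \<in> set L) \<and>
     (\<forall>i. Suc i < length L \<longrightarrow> adj_transp (L ! i) (L ! Suc i)) \<and>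
     (\<forall>i < fact m div 2. L ! (i + fact m div 2) = rev (L ! i))"

definition P_base :: "nat \<Rightarrow> nat list" where
  "P_base m = rev [3..<m] @ [1, 2]"

definition property_P :: "nat \<Rightarrow> nat list list \<Rightarrow> bool" where
  "property_P m L \<longleftrightarrow>
     L ! 0 = [1..<Suc m] \<and>
     (\<forall>k < 4. L ! (fact m div 2 - 1 - k) = take k (P_base m) @ m # drop k (P_base m))"

end

theory Submission
  imports Defs "HOL-Combinatorics.Multiset_Permutations"
begin

text \<open>Let \<open>m = n - 3\<close>, which is odd, and \<open>h = m!/2\<close>. A reverse Gray code for \<open>m\<close> symbols can be
  rotated and relabelled into a code \<open>S\<close> that starts with \<open>1 2 \<dots> m\<close> and whose step into the
  middle swaps the last two symbols, so that \<open>S\<^sub>h\<^sub>-\<^sub>1 = m (m-1) \<dots> 3 1 2\<close>. For each of the words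
  \<open>S\<^sub>0, \<dots>, S\<^sub>h\<^sub>-\<^sub>1\<close> we list all words on \<open>n\<close> symbols that restrict to it on \<open>{1..m}\<close> by a
  path of adjacent transpositions (a block): nested zigzags of the symbols \<open>m+1, m+2, m+3\<close>
  in the manner of Steinhaus-Johnson-Trotter, with some twisted variants, chosen so that
  consecutive blocks are linked by the transposition linking \<open>S\<^sub>j\<close> and \<open>S\<^sub>j\<^sub>+\<^sub>1\<close>. The blocks form
  the first half \<open>H\<close> of the new code and the reversals of \<open>H\<close> its second half. The halves are
  disjoint because \<open>S\<^sub>i \<noteq> rev S\<^sub>j = S\<^sub>j\<^sub>+\<^sub>h\<close>; they are linked because \<open>H\<close> ends with
  \<open>n (n-1) (n-2) S\<^sub>h\<^sub>-\<^sub>1\<close> while the reversal of its first word is \<open>n (n-1) (n-2) S\<^sub>h\<close>; and the final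
  sweep of \<open>n\<close> through \<open>(n-1) (n-2) S\<^sub>h\<^sub>-\<^sub>1\<close> yields property P.\<close>

section \<open>Inserting a symbol into a word\<close>

definition insert_at :: "nat \<Rightarrow> 'a \<Rightarrow> 'a list \<Rightarrow> 'a list" where
  "insert_at p x w = take p w @ x # drop p w"

lemma insert_at_0 [simp]: "insert_at 0 x w = x # w"
  by (simp add: insert_at_def)

lemma insert_at_length: "length w = p \<Longrightarrow> insert_at p x w = w @ [x]"
  by (simp add: insert_at_def)

lemma length_insert_at [simp]: "length (insert_at p x w) = Suc (length w)"
  by (simp add: insert_at_def)

lemma set_insert_at [simp]: "set (insert_at p x w) = insert x (set w)"
  unfolding insert_at_def by (metis Un_insert_right append_take_drop_id set_append list.simps(15))

lemma distinct_insert_at [simp]: "distinct (insert_at p x w) \<longleftrightarrow> x \<notin> set w \<and> distinct w"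
proof -
  have split: "distinct w \<longleftrightarrow> distinct (take p w @ drop p w)"
    by simp
  have "set w = set (take p w) \<union> set (drop p w)"
    by (metis append_take_drop_id set_append)
  then show ?thesis
    unfolding insert_at_def split distinct_append by auto
qed

lemma filter_insert_at [simp]: "\<not> P x \<Longrightarrow> filter P (insert_at p x w) = filter P w"
  by (metis insert_at_def filter.simps(2) filter_append append_take_drop_id)

lemma last_insert_at: "p < length w \<Longrightarrow> last (insert_at p x w) = last w"
  by (simp add: insert_at_def)

lemma removeAll_insert_at:
  assumes "x \<notin> set w"
  shows "removeAll x (insert_at p x w) = w"
proof -
  have "x \<notin> set (take p w)" "x \<notin> set (drop p w)"
    using assms by (auto dest: in_set_takeD in_set_dropD)
  then show ?thesis
    by (simp add: insert_at_def)
qed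

lemma insert_at_inject:
  assumes "x \<notin> set w" "x \<notin> set v" "p \<le> length w" "q \<le> length v"
    and "insert_at p x w = insert_at q x v"
  shows "p = q \<and> w = v"
proof -
  have prefix: "takeWhile (\<lambda>y. y \<noteq> x) (insert_at p x u) = take p u" if "x \<notin> set u" for u p
  proof -
    have "\<forall>z\<in>set (take p u). z \<noteq> x"
      using that by (auto dest: in_set_takeD)
    then show ?thesis
      by (simp add: insert_at_def takeWhile_append2)
  qed
  have "w = v"
    using removeAll_insert_at assms by metis
  moreover have "take p w = take q v"
    using prefix assms by metis
  ultimately show ?thesis
    using assms(3,4) by (metis length_take min_absorb2)
qed

lemma insert_at_commute:
  assumes "r \<le> p" "p \<le> length w"
  shows "insert_at (Suc p) y (insert_at r x w) = insert_at r x (insert_at p y w)"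
proof -
  have "drop r (take p w) = take (p - r) (drop r w)"
    by (rule drop_take)
  then show ?thesis
    using assms by (simp add: insert_at_def take_append drop_append min_def Suc_diff_le)
qed

section \<open>Adjacent transpositions\<close>

lemma adj_transp_length: "adj_transp w v \<Longrightarrow> length v = length w"
  by (auto simp: adj_transp_def)

lemma adj_transp_sym:
  assumes "adj_transp w v"
  shows "adj_transp v w"
proof -
  obtain i where i: "Suc i < length w" "v = w[i := w ! Suc i, Suc i := w ! i]"
    using assms by (auto simp: adj_transp_def)
  then have "w = v[i := v ! Suc i, Suc i := v ! i]"
    by (simp add: nth_list_update list_update_swap[of i "Suc i"])
  then show ?thesis
    using i unfolding adj_transp_def by auto
qed

lemma adj_transp_append:
  assumes "adj_transp w v"
  shows "adj_transp (us @ w @ vs) (us @ v @ vs)"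
proof -
  obtain i where "Suc i < length w" "v = w[i := w ! Suc i, Suc i := w ! i]"
    using assms by (auto simp: adj_transp_def)
  then show ?thesis
    unfolding adj_transp_def
    by (intro exI[of _ "length us + i"]) (simp add: list_update_append nth_append)
qed

lemma adj_transp_Cons: "adj_transp w v \<Longrightarrow> adj_transp (x # w) (x # v)"
  using adj_transp_append[of w v "[x]" "[]"] by simp

lemma adj_transp_snoc: "adj_transp w v \<Longrightarrow> adj_transp (w @ [x]) (v @ [x])"
  using adj_transp_append[of w v "[]" "[x]"] by simp

lemma adj_transp_rev:
  assumes "adj_transp w v"
  shows "adj_transp (rev w) (rev v)"
proof -
  obtain i where i: "Suc i < length w" "v = w[i := w ! Suc i, Suc i := w ! i]"
    using assms by (auto simp: adj_transp_def)
  define j where "j = length w - 2 - i"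
  have "rev v = (rev w)[j := rev w ! Suc j, Suc j := rev w ! j]"
    using i by (simp add: rev_update rev_nth j_def list_update_swap Suc_diff_Suc numeral_2_eq_2)
  moreover have "Suc j < length (rev w)"
    using i(1) by (simp add: j_def)
  ultimately show ?thesis
    unfolding adj_transp_def by blast
qed

lemma adj_transp_map: "adj_transp w v \<Longrightarrow> adj_transp (map f w) (map f v)"
  unfolding adj_transp_def by (auto simp: map_update)

lemma adj_transp_insert_at_Suc:
  assumes "p < length w"
  shows "adj_transp (insert_at p x w) (insert_at (Suc p) x w)"
proof -
  have "adj_transp [x, w ! p] [w ! p, x]"
    unfolding adj_transp_def by (auto intro!: exI[of _ 0])
  then have "adj_transp (take p w @ [x, w ! p] @ drop (Suc p) w) (take p w @ [w ! p, x] @ drop (Suc p) w)"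
    by (rule adj_transp_append)
  then show ?thesis
    using assms by (simp add: insert_at_def Cons_nth_drop_Suc take_Suc_conv_app_nth)
qed

section \<open>Zigzags\<close>

definition sweep :: "nat \<Rightarrow> bool \<Rightarrow> nat list" where
  "sweep k down = (if down then rev [0..<k] else [0..<k])"

fun zigzag :: "nat \<Rightarrow> bool \<Rightarrow> 'a \<Rightarrow> 'a list list \<Rightarrow> 'a list list" where
  "zigzag e down x [] = []"
| "zigzag e down x (g # G) =
     map (\<lambda>p. insert_at p x g) (sweep (Suc (length g) - e) down) @ zigzag e (\<not> down) x G"

text \<open>The sweep of \<open>x\<close> through \<open>g\<close> ends, and its sweep through the next word \<open>h\<close> starts, at
  position \<open>p\<close>; the two sweeps are linked if \<open>g\<close> and \<open>h\<close> stay adjacent with \<open>x\<close> inserted there.\<close>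

fun zigzag_links :: "nat \<Rightarrow> bool \<Rightarrow> nat \<Rightarrow> nat list list \<Rightarrow> bool" where
  "zigzag_links e down x (g # h # G) =
     (let p = (if down then 0 else length g - e)
      in adj_transp (insert_at p x g) (insert_at p x h) \<and> zigzag_links e (\<not> down) x (h # G))"
| "zigzag_links e down x _ = True"

lemma set_sweep [simp]: "set (sweep k down) = {0..<k}"
  by (simp add: sweep_def)

lemma length_sweep [simp]: "length (sweep k down) = k"
  by (simp add: sweep_def)

lemma sweep_eq_Nil_iff [simp]: "sweep k down = [] \<longleftrightarrow> k = 0"
  by (simp add: sweep_def)

lemma hd_map_sweep: "0 < k \<Longrightarrow> hd (map f (sweep k down)) = f (if down then k - 1 else 0)"
  by (auto simp: sweep_def hd_map hd_rev hd_upt)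

lemma last_map_sweep: "0 < k \<Longrightarrow> last (map f (sweep k down)) = f (if down then 0 else k - 1)"
  by (auto simp: sweep_def last_map last_rev hd_upt)

lemma length_zigzag:
  "(\<forall>g\<in>set G. length g = l) \<Longrightarrow> length (zigzag e down x G) = length G * (Suc l - e)"
  by (induction G arbitrary: down) auto

lemma zigzag_append:
  "zigzag e down x (G @ H) = zigzag e down x G @ zigzag e (if even (length G) then down else \<not> down) x H"
  by (induction G arbitrary: down) auto

lemma in_set_zigzagE:
  assumes "w \<in> set (zigzag e down x G)"
  obtains g p where "g \<in> set G" "p + e \<le> length g" "w = insert_at p x g"
proof -
  have "\<exists>g\<in>set G. \<exists>p. p + e \<le> length g \<and> w = insert_at p x g"
    using assms
  proof (induction G arbitrary: down)
    case (Cons g G)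
    show ?case
    proof (cases "w \<in> set (zigzag e (\<not> down) x G)")
      case True
      then show ?thesis
        using Cons.IH by fastforce
    next
      case False
      then obtain p where "p < Suc (length g) - e" "w = insert_at p x g"
        using Cons.prems by auto
      then show ?thesis
        by (intro bexI[of _ g] exI[of _ p]) auto
    qed
  qed simp
  then show ?thesis
    using that by blast
qed

lemma length_in_set_zigzag:
  "(\<forall>g\<in>set G. length g = l) \<Longrightarrow> w \<in> set (zigzag e down x G) \<Longrightarrow> length w = Suc l"
  by (auto elim: in_set_zigzagE)

lemma distinct_zigzag:
  "distinct G \<Longrightarrow> (\<forall>g\<in>set G. x \<notin> set g) \<Longrightarrow> distinct (zigzag e down x G)"
proof (induction G arbitrary: down)
  case Nil
  then show ?case by simp
next
  case (Cons g G)
  have "inj_on (\<lambda>p. insert_at p x g) {0..<Suc (length g) - e}"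
    using insert_at_inject[of x g g] Cons.prems by (auto intro!: inj_onI)
  then have "distinct (map (\<lambda>p. insert_at p x g) (sweep (Suc (length g) - e) down))"
    by (simp add: distinct_map sweep_def)
  moreover have "insert_at p x g \<notin> set (zigzag e (\<not> down) x G)" for p
  proof
    assume "insert_at p x g \<in> set (zigzag e (\<not> down) x G)"
    then obtain h q where "h \<in> set G" "insert_at p x g = insert_at q x h"
      by (auto elim: in_set_zigzagE)
    then have "g = h"
      using Cons.prems by (metis removeAll_insert_at list.set_intros)
    then show False
      using \<open>h \<in> set G\<close> Cons.prems by simp
  qed
  ultimately show ?case
    using Cons by auto
qed

lemma successively_sweep:
  assumes "k \<le> Suc (length g)"
  shows "successively adj_transp (map (\<lambda>p. insert_at p x g) (sweep k down))"
proof -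
  have up: "successively adj_transp (map (\<lambda>p. insert_at p x g) [0..<k])"
    unfolding successively_conv_nth using assms by (auto intro!: adj_transp_insert_at_Suc)
  then have "successively (\<lambda>u v. adj_transp v u) (map (\<lambda>p. insert_at p x g) [0..<k])"
    by (rule successively_mono) (rule adj_transp_sym)
  then show ?thesis
    using up by (simp add: sweep_def rev_map[symmetric])
qed

lemma successively_zigzag:
  "e \<le> 1 \<Longrightarrow> (\<forall>g\<in>set G. e \<le> length g) \<Longrightarrow> zigzag_links e down x G \<Longrightarrow>
   successively adj_transp (zigzag e down x G)"
proof (induction G arbitrary: down rule: induct_list012)
  case (2 g)
  then show ?case
    using successively_sweep[of "Suc (length g) - e"] by simp
next
  case (3 g h G)
  let ?p = "if down then 0 else length g - e"
  have links: "adj_transp (insert_at ?p x g) (insert_at ?p x h)" "zigzag_links e (\<not> down) x (h # G)"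
    using "3.prems"(3) by (simp_all add: Let_def)
  have "length h = length g"
    using adj_transp_length[OF links(1)] by simp
  moreover have "successively adj_transp (zigzag e (\<not> down) x (h # G))"
    by (rule "3.IH"(2)) (use "3.prems" links(2) in simp_all)
  ultimately show ?case
    using "3.prems"(1,2) links(1) successively_sweep[of "Suc (length g) - e" g x down]
    by (auto simp: successively_append_iff hd_map_sweep last_map_sweep)
qed simp

lemma zigzag_links_if_successively:
  "successively adj_transp G \<Longrightarrow> zigzag_links 0 down x G"
proof (induction G arbitrary: down rule: induct_list012)
  case (3 g h G)
  then have gh: "adj_transp g h"
    by simp
  then have "adj_transp (insert_at (if down then 0 else length g) x g) (insert_at (if down then 0 else length g) x h)"
    using adj_transp_Cons[OF gh] adj_transp_snoc[OF gh] adj_transp_length[OF gh]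
    by (auto simp: insert_at_length)
  then show ?case
    using "3.IH"(2) "3.prems" by (auto simp: Let_def)
qed auto

lemma hd_zigzag:
  "G \<noteq> [] \<Longrightarrow> e \<le> length (hd G) \<Longrightarrow>
   hd (zigzag e down x G) = insert_at (if down then length (hd G) - e else 0) x (hd G)"
  by (cases G) (auto simp: hd_map_sweep)

lemma last_zigzag:
  "G \<noteq> [] \<Longrightarrow> (\<forall>g\<in>set G. e \<le> length g) \<Longrightarrow>
   last (zigzag e down x G) = insert_at (if down = odd (length G) then 0 else length (last G) - e) x (last G)"
proof (induction G arbitrary: down)
  case (Cons g G)
  show ?case
  proof (cases G)
    case Nil
    then show ?thesis
      using Cons.prems by (auto simp: last_map_sweep)
  next
    case (Cons h G')
    then have "zigzag e (\<not> down) x G \<noteq> []"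
      using Cons.prems by simp
    then show ?thesis
      using Cons.IH[of "\<not> down"] Cons.prems \<open>G = h # G'\<close> by auto
  qed
qed simp

lemma successively_zigzag_0:
  "successively adj_transp G \<Longrightarrow> successively adj_transp (zigzag 0 down x G)"
  by (rule successively_zigzag) (simp_all add: zigzag_links_if_successively)

lemma zigzag_0_ne:
  "G \<noteq> [] \<Longrightarrow> zigzag 0 down x G \<noteq> []"
  by (cases G) auto

section \<open>Nested and twisted zigzags\<close>

definition nested_zigzag :: "'a \<Rightarrow> 'a \<Rightarrow> 'a \<Rightarrow> bool \<Rightarrow> bool \<Rightarrow> bool \<Rightarrow> 'a list \<Rightarrow> 'a list list" where
  "nested_zigzag x y z d1 d2 d3 \<sigma> = zigzag 0 d3 z (zigzag 0 d2 y (zigzag 0 d1 x [\<sigma>]))"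

text \<open>A path through the same words as \<open>zigzag 0 d y (zigzag 0 d' x [\<sigma>])\<close>, but from
  \<open>\<sigma> @ [x, y]\<close> to \<open>\<sigma> @ [y, x]\<close>: first \<open>x\<close> travels to the front while \<open>y\<close> stays last,
  then \<open>x\<close> travels back while \<open>y\<close> zigzags over all but the last position.\<close>

definition twisted_pairs :: "'a \<Rightarrow> 'a \<Rightarrow> 'a list \<Rightarrow> 'a list list" where
  "twisted_pairs x y \<sigma> =
     map (\<lambda>g. g @ [y]) (zigzag 0 True x [\<sigma>]) @
     zigzag 1 True y (map (\<lambda>r. insert_at r x \<sigma>) [0..<Suc (length \<sigma>)])"

definition twisted_zigzag :: "'a \<Rightarrow> 'a \<Rightarrow> 'a \<Rightarrow> bool \<Rightarrow> 'a list \<Rightarrow> 'a list list" where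
  "twisted_zigzag x y z d \<sigma> = zigzag 0 d z (twisted_pairs x y \<sigma>)"

definition insertions3 :: "'a \<Rightarrow> 'a \<Rightarrow> 'a \<Rightarrow> 'a list \<Rightarrow> 'a list set" where
  "insertions3 x y z \<sigma> = {insert_at r z (insert_at q y (insert_at p x \<sigma>)) | p q r. True}"

lemma nested_zigzag_subset: "set (nested_zigzag x y z d1 d2 d3 \<sigma>) \<subseteq> insertions3 x y z \<sigma>"
  unfolding nested_zigzag_def insertions3_def
  by (fastforce elim!: in_set_zigzagE)

lemma twisted_pairs_elements:
  assumes "w \<in> set (twisted_pairs x y \<sigma>)"
  obtains p q where "w = insert_at q y (insert_at p x \<sigma>)"
proof -
  have "\<exists>p q. w = insert_at q y (insert_at p x \<sigma>)"
    using assms unfolding twisted_pairs_def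
    by (fastforce elim!: in_set_zigzagE intro: insert_at_length[symmetric])
  then show ?thesis
    using that by blast
qed

lemma twisted_zigzag_subset: "set (twisted_zigzag x y z d \<sigma>) \<subseteq> insertions3 x y z \<sigma>"
  unfolding twisted_zigzag_def insertions3_def
  by (fastforce elim!: in_set_zigzagE twisted_pairs_elements)

lemma length_nested_zigzag:
  "length (nested_zigzag x y z d1 d2 d3 \<sigma>) = Suc (length \<sigma>) * Suc (Suc (length \<sigma>)) * Suc (Suc (Suc (length \<sigma>)))"
proof -
  let ?G1 = "zigzag 0 d1 x [\<sigma>]" and ?G2 = "zigzag 0 d2 y (zigzag 0 d1 x [\<sigma>])"
  have l1: "\<forall>g\<in>set ?G1. length g = Suc (length \<sigma>)"
    by (auto elim: in_set_zigzagE)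
  then have l2: "\<forall>g\<in>set ?G2. length g = Suc (Suc (length \<sigma>))"
    using length_in_set_zigzag[OF l1] by blast
  have "length ?G2 = Suc (length \<sigma>) * Suc (Suc (length \<sigma>))"
    unfolding length_zigzag[OF l1] by simp
  then show ?thesis
    unfolding nested_zigzag_def length_zigzag[OF l2] by simp
qed

lemma length_twisted_pairs:
  "length (twisted_pairs x y \<sigma>) = Suc (length \<sigma>) * Suc (Suc (length \<sigma>))"
proof -
  have "length (zigzag 1 True y (map (\<lambda>r. insert_at r x \<sigma>) [0..<Suc (length \<sigma>)]))
      = Suc (length \<sigma>) * Suc (length \<sigma>)"
    by (subst length_zigzag[where l = "Suc (length \<sigma>)"]) auto
  then show ?thesis
    unfolding twisted_pairs_def by simp
qed

lemma length_twisted_zigzag: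
  "length (twisted_zigzag x y z d \<sigma>) = Suc (length \<sigma>) * Suc (Suc (length \<sigma>)) * Suc (Suc (Suc (length \<sigma>)))"
proof -
  have l: "\<forall>g\<in>set (twisted_pairs x y \<sigma>). length g = Suc (Suc (length \<sigma>))"
    by (auto elim: twisted_pairs_elements)
  show ?thesis
    unfolding twisted_zigzag_def length_zigzag[OF l] length_twisted_pairs by simp
qed

lemma distinct_nested_zigzag:
  assumes "distinct (x # y # z # \<sigma>)"
  shows "distinct (nested_zigzag x y z d1 d2 d3 \<sigma>)"
proof -
  let ?G1 = "zigzag 0 d1 x [\<sigma>]" and ?G2 = "zigzag 0 d2 y (zigzag 0 d1 x [\<sigma>])"
  have d1: "distinct ?G1"
    by (rule distinct_zigzag) (use assms in auto)
  have yz: "\<forall>g\<in>set ?G1. y \<notin> set g \<and> z \<notin> set g"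
    using assms by (auto elim!: in_set_zigzagE)
  have "distinct ?G2"
    by (rule distinct_zigzag[OF d1]) (use yz in blast)
  moreover have "\<forall>g\<in>set ?G2. z \<notin> set g"
    using yz assms by (auto elim!: in_set_zigzagE)
  ultimately show ?thesis
    unfolding nested_zigzag_def by (rule distinct_zigzag)
qed

lemma distinct_twisted_pairs:
  assumes "distinct (x # y # \<sigma>)"
  shows "distinct (twisted_pairs x y \<sigma>)"
proof -
  let ?G = "map (\<lambda>r. insert_at r x \<sigma>) [0..<Suc (length \<sigma>)]"
  have "distinct (zigzag 0 True x [\<sigma>])"
    by (rule distinct_zigzag) (use assms in auto)
  then have part1: "distinct (map (\<lambda>g. g @ [y]) (zigzag 0 True x [\<sigma>]))"
    by (simp add: distinct_map inj_on_def)
  have "inj_on (\<lambda>r. insert_at r x \<sigma>) {0..<Suc (length \<sigma>)}"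
    using insert_at_inject[of x \<sigma> \<sigma>] assms by (auto intro!: inj_onI)
  then have "distinct ?G"
    by (simp add: distinct_map del: upt_Suc)
  then have part2: "distinct (zigzag 1 True y ?G)"
    by (rule distinct_zigzag) (use assms in auto)
  have "last w \<noteq> y" if "w \<in> set (zigzag 1 True y ?G)" for w
  proof -
    from that obtain g p where g: "g \<in> set ?G" "p + 1 \<le> length g" "w = insert_at p y g"
      by (rule in_set_zigzagE)
    then have "last w = last g" "g \<noteq> []" "y \<notin> set g"
      using assms by (auto simp: last_insert_at)
    then show ?thesis
      by (metis last_in_set)
  qed
  then have "set (map (\<lambda>g. g @ [y]) (zigzag 0 True x [\<sigma>])) \<inter> set (zigzag 1 True y ?G) = {}"
    by fastforce
  then show ?thesis
    unfolding twisted_pairs_def using part1 part2 by simp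
qed

lemma distinct_twisted_zigzag:
  assumes "distinct (x # y # z # \<sigma>)"
  shows "distinct (twisted_zigzag x y z d \<sigma>)"
proof -
  have "distinct (twisted_pairs x y \<sigma>)"
    using assms by (intro distinct_twisted_pairs) auto
  moreover have "\<forall>g\<in>set (twisted_pairs x y \<sigma>). z \<notin> set g"
    using assms by (auto elim: twisted_pairs_elements)
  ultimately show ?thesis
    unfolding twisted_zigzag_def by (rule distinct_zigzag)
qed

lemma successively_nested_zigzag: "successively adj_transp (nested_zigzag x y z d1 d2 d3 \<sigma>)"
  unfolding nested_zigzag_def by (intro successively_zigzag_0) simp

lemma zigzag_links_twisted:
  assumes "odd (length \<sigma>)" "i \<le> length \<sigma>"
  shows "zigzag_links 1 (even i) y (map (\<lambda>r. insert_at r x \<sigma>) [i..<Suc (length \<sigma>)])"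
  using assms(2)
proof (induction "length \<sigma> - i" arbitrary: i)
  case 0
  then show ?case
    by simp
next
  case (Suc k)
  obtain m where m: "length \<sigma> = m"
    by simp
  have i: "i < m"
    using Suc m by simp
  have turn: "adj_transp (insert_at (if even i then 0 else m) y (insert_at i x \<sigma>))
                         (insert_at (if even i then 0 else m) y (insert_at (Suc i) x \<sigma>))"
  proof (cases "even i")
    case True
    then show ?thesis
      using adj_transp_Cons[OF adj_transp_insert_at_Suc[of i \<sigma> x]] i m by simp
  next
    case False
    obtain m' where m': "m = Suc m'"
      using i by (cases m) auto
    moreover have "odd m"
      using assms(1) m by simp
    \<comment> \<open>both \<open>i\<close> and \<open>m\<close> are odd, so \<open>y\<close> at position \<open>m\<close> lies to the right of \<open>x\<close>\<close>
    ultimately have "Suc i \<le> m'"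
      using i False by presburger
    then have "insert_at m y (insert_at j x \<sigma>) = insert_at j x (insert_at m' y \<sigma>)" if "j \<le> Suc i" for j
      using insert_at_commute[of j m' \<sigma> y x] that m' m by simp
    moreover have "adj_transp (insert_at i x (insert_at m' y \<sigma>)) (insert_at (Suc i) x (insert_at m' y \<sigma>))"
      by (rule adj_transp_insert_at_Suc) (use i m in simp)
    ultimately show ?thesis
      using False by simp
  qed
  have "[i..<Suc m] = i # [Suc i..<Suc m]" "[Suc i..<Suc m] = Suc i # [Suc (Suc i)..<Suc m]"
    using i by (simp_all add: upt_conv_Cons del: upt_Suc)
  moreover have "zigzag_links 1 (\<not> even i) y (map (\<lambda>r. insert_at r x \<sigma>) [Suc i..<Suc m])"
    using Suc.hyps(1)[of "Suc i"] Suc.hyps(2) i m by simp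
  ultimately show ?case
    using turn m by (auto simp: Let_def simp del: upt_Suc)
qed

lemma hd_twisted_pairs: "hd (twisted_pairs x y \<sigma>) = \<sigma> @ [x, y]"
  unfolding twisted_pairs_def by (simp add: hd_map_sweep insert_at_length)

lemma last_twisted_pairs:
  assumes "odd (length \<sigma>)"
  shows "last (twisted_pairs x y \<sigma>) = \<sigma> @ [y, x]"
proof -
  let ?G = "map (\<lambda>r. insert_at r x \<sigma>) [0..<Suc (length \<sigma>)]"
  have "?G \<noteq> []" "last ?G = \<sigma> @ [x]"
    by (simp_all add: insert_at_length)
  then have "last (zigzag 1 True y ?G) = insert_at (length \<sigma>) y (\<sigma> @ [x])"
    using last_zigzag[of ?G 1 True y] assms by simp
  moreover have "insert_at (length \<sigma>) y (\<sigma> @ [x]) = \<sigma> @ [y, x]"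
    by (simp add: insert_at_def)
  moreover have "zigzag 1 True y ?G \<noteq> []"
    by (simp add: upt_conv_Cons del: upt_Suc)
  ultimately show ?thesis
    unfolding twisted_pairs_def by simp
qed

lemma successively_twisted_pairs:
  assumes "odd (length \<sigma>)"
  shows "successively adj_transp (twisted_pairs x y \<sigma>)"
proof -
  let ?G = "map (\<lambda>r. insert_at r x \<sigma>) [0..<Suc (length \<sigma>)]"
  have "successively adj_transp (zigzag 0 True x [\<sigma>])"
    by (rule successively_zigzag_0) simp
  then have part1: "successively adj_transp (map (\<lambda>g. g @ [y]) (zigzag 0 True x [\<sigma>]))"
    unfolding successively_map by (rule successively_mono) (rule adj_transp_snoc)
  have "zigzag_links 1 True y ?G"
    using zigzag_links_twisted[OF assms, of 0 y x] by simp
  then have part2: "successively adj_transp (zigzag 1 True y ?G)"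
    by (rule successively_zigzag[rotated 2]) auto
  have "adj_transp (insert_at (length \<sigma>) y (x # \<sigma>)) (insert_at (Suc (length \<sigma>)) y (x # \<sigma>))"
    by (rule adj_transp_insert_at_Suc) simp
  then have "adj_transp (x # \<sigma> @ [y]) (hd (zigzag 1 True y ?G))"
    by (simp add: hd_map_sweep upt_conv_Cons insert_at_length adj_transp_sym del: upt_Suc)
  moreover have "last (map (\<lambda>g. g @ [y]) (zigzag 0 True x [\<sigma>])) = x # \<sigma> @ [y]"
    by (simp add: last_map_sweep)
  ultimately show ?thesis
    unfolding twisted_pairs_def using part1 part2 by (simp add: successively_append_iff)
qed

lemma successively_twisted_zigzag:
  "odd (length \<sigma>) \<Longrightarrow> successively adj_transp (twisted_zigzag x y z d \<sigma>)"
  unfolding twisted_zigzag_def by (intro successively_zigzag_0 successively_twisted_pairs)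

lemma hd_nested_zigzag:
  "hd (nested_zigzag x y z d1 d2 d3 \<sigma>) =
     insert_at (if d3 then Suc (Suc (length \<sigma>)) else 0) z
       (insert_at (if d2 then Suc (length \<sigma>) else 0) y
         (insert_at (if d1 then length \<sigma> else 0) x \<sigma>))"
proof -
  let ?G1 = "zigzag 0 d1 x [\<sigma>]" and ?G2 = "zigzag 0 d2 y (zigzag 0 d1 x [\<sigma>])"
  have G1: "?G1 \<noteq> []" "hd ?G1 = insert_at (if d1 then length \<sigma> else 0) x \<sigma>"
    by (simp_all add: hd_map_sweep)
  then have G2: "?G2 \<noteq> []" "hd ?G2 = insert_at (if d2 then Suc (length \<sigma>) else 0) y (hd ?G1)"
    using hd_zigzag[of ?G1 0 d2 y] by (simp_all add: zigzag_0_ne)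
  then show ?thesis
    unfolding nested_zigzag_def using hd_zigzag[of ?G2 0 d3 z] G1 by simp
qed

lemma last_nested_zigzag:
  assumes "odd (length \<sigma>)"
  shows "last (nested_zigzag x y z d1 d2 d3 \<sigma>) =
     insert_at (if d3 then Suc (Suc (length \<sigma>)) else 0) z
       (insert_at (if d2 then Suc (length \<sigma>) else 0) y
         (insert_at (if d1 then 0 else length \<sigma>) x \<sigma>))"
proof -
  let ?G1 = "zigzag 0 d1 x [\<sigma>]" and ?G2 = "zigzag 0 d2 y (zigzag 0 d1 x [\<sigma>])"
  have l1: "\<forall>g\<in>set ?G1. length g = Suc (length \<sigma>)"
    by (auto elim: in_set_zigzagE)
  then have l2: "\<forall>g\<in>set ?G2. length g = Suc (Suc (length \<sigma>))"
    using length_in_set_zigzag[OF l1] by blast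
  have "?G1 \<noteq> []" "length ?G1 = Suc (length \<sigma>)" "last ?G1 = insert_at (if d1 then 0 else length \<sigma>) x \<sigma>"
    by (simp_all add: last_map_sweep)
  then have "?G2 \<noteq> []" "length ?G2 = Suc (length \<sigma>) * Suc (Suc (length \<sigma>))"
    "last ?G2 = insert_at (if d2 then Suc (length \<sigma>) else 0) y (last ?G1)"
    using last_zigzag[of ?G1 0 d2 y] length_zigzag[OF l1, of 0 d2 y] assms
    by (simp_all add: zigzag_0_ne del: zigzag.simps)
  then show ?thesis
    unfolding nested_zigzag_def using last_zigzag[of ?G2 0 d3 z] l2 assms \<open>last ?G1 = _\<close>
    by (simp del: zigzag.simps)
qed

lemma hd_twisted_zigzag:
  "hd (twisted_zigzag x y z d \<sigma>) = insert_at (if d then Suc (Suc (length \<sigma>)) else 0) z (\<sigma> @ [x, y])"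
proof -
  have "twisted_pairs x y \<sigma> \<noteq> []"
    using length_twisted_pairs[of x y \<sigma>] by auto
  then show ?thesis
    unfolding twisted_zigzag_def using hd_zigzag[of "twisted_pairs x y \<sigma>" 0 d z]
    by (simp add: hd_twisted_pairs)
qed

lemma last_twisted_zigzag:
  assumes "odd (length \<sigma>)"
  shows "last (twisted_zigzag x y z d \<sigma>) = insert_at (if d then Suc (Suc (length \<sigma>)) else 0) z (\<sigma> @ [y, x])"
proof -
  have "twisted_pairs x y \<sigma> \<noteq> []"
    using length_twisted_pairs[of x y \<sigma>] by auto
  then show ?thesis
    unfolding twisted_zigzag_def using last_zigzag[of "twisted_pairs x y \<sigma>" 0 d z] assms
    by (simp add: last_twisted_pairs length_twisted_pairs)
qed

section \<open>Blocks\<close>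

definition pattern_path :: "nat \<Rightarrow> nat list \<Rightarrow> nat list list \<Rightarrow> bool" where
  "pattern_path m \<sigma> Q \<longleftrightarrow>
     length Q = (m + 1) * (m + 2) * (m + 3) \<and> distinct Q \<and> successively adj_transp Q \<and>
     (\<forall>w\<in>set Q. is_perm_word (m + 3) w \<and> filter (\<lambda>k. k \<le> m) w = \<sigma>)"

lemma pattern_path_rev: "pattern_path m \<sigma> Q \<Longrightarrow> pattern_path m \<sigma> (rev Q)"
  unfolding pattern_path_def by (auto intro: successively_mono adj_transp_sym)

lemma pattern_path_nonempty: "pattern_path m \<sigma> Q \<Longrightarrow> Q \<noteq> []"
  unfolding pattern_path_def by auto

lemma length_perm_word: "is_perm_word m \<sigma> \<Longrightarrow> length \<sigma> = m"
  unfolding is_perm_word_def by (metis card_atLeastAtMost diff_Suc_1 distinct_card)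

lemma new_symbols:
  assumes "is_perm_word m \<sigma>" "distinct [x, y, z]" "{x, y, z} = {m + 1, m + 2, m + 3}"
  shows "m < x" "m < y" "m < z" "distinct (x # y # z # \<sigma>)"
proof -
  have "x \<in> {m + 1, m + 2, m + 3}" "y \<in> {m + 1, m + 2, m + 3}" "z \<in> {m + 1, m + 2, m + 3}"
    using assms(3) by blast+
  then show "m < x" "m < y" "m < z"
    by auto
  then show "distinct (x # y # z # \<sigma>)"
    using assms(1,2) unfolding is_perm_word_def by auto
qed

lemma insertions3_perm_word:
  assumes "is_perm_word m \<sigma>" "distinct [x, y, z]" "{x, y, z} = {m + 1, m + 2, m + 3}"
    and "w \<in> insertions3 x y z \<sigma>"
  shows "is_perm_word (m + 3) w \<and> filter (\<lambda>k. k \<le> m) w = \<sigma>"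
proof -
  note new = new_symbols[OF assms(1-3)]
  have "{1..m + 3} = {1..m} \<union> {m + 1, m + 2, m + 3}"
    by auto
  then show ?thesis
    using assms new unfolding insertions3_def is_perm_word_def
    by (auto simp: filter_id_conv)
qed

lemma pattern_path_nested_zigzag:
  assumes "is_perm_word m \<sigma>" "distinct [x, y, z]" "{x, y, z} = {m + 1, m + 2, m + 3}"
  shows "pattern_path m \<sigma> (nested_zigzag x y z d1 d2 d3 \<sigma>)"
proof -
  have "length (nested_zigzag x y z d1 d2 d3 \<sigma>) = (m + 1) * (m + 2) * (m + 3)"
    using length_nested_zigzag[of x y z d1 d2 d3 \<sigma>] length_perm_word[OF assms(1)]
    by (simp add: numeral_eq_Suc)
  moreover have "\<forall>w\<in>set (nested_zigzag x y z d1 d2 d3 \<sigma>). is_perm_word (m + 3) w \<and> filter (\<lambda>k. k \<le> m) w = \<sigma>"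
    using insertions3_perm_word[OF assms] nested_zigzag_subset[of x y z d1 d2 d3 \<sigma>] by blast
  ultimately show ?thesis
    unfolding pattern_path_def
    using distinct_nested_zigzag[OF new_symbols(4)[OF assms]] successively_nested_zigzag by blast
qed

lemma pattern_path_twisted_zigzag:
  assumes "is_perm_word m \<sigma>" "odd m" "distinct [x, y, z]" "{x, y, z} = {m + 1, m + 2, m + 3}"
  shows "pattern_path m \<sigma> (twisted_zigzag x y z d \<sigma>)"
proof -
  have "length (twisted_zigzag x y z d \<sigma>) = (m + 1) * (m + 2) * (m + 3)"
    using length_twisted_zigzag[of x y z d \<sigma>] length_perm_word[OF assms(1)]
    by (simp add: numeral_eq_Suc)
  moreover have "\<forall>w\<in>set (twisted_zigzag x y z d \<sigma>). is_perm_word (m + 3) w \<and> filter (\<lambda>k. k \<le> m) w = \<sigma>"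
    using insertions3_perm_word[OF assms(1,3,4)] twisted_zigzag_subset[of x y z d \<sigma>] by blast
  moreover have "successively adj_transp (twisted_zigzag x y z d \<sigma>)"
    using successively_twisted_zigzag length_perm_word[OF assms(1)] assms(2) by simp
  ultimately show ?thesis
    unfolding pattern_path_def
    using distinct_twisted_zigzag[OF new_symbols(4)[OF assms(1,3,4)]] by blast
qed

text \<open>Block \<open>j\<close> ends, and block \<open>j + 1\<close> starts, with the three new symbols placed around the
  pattern as prescribed by \<open>junction m j\<close>; hence an adjacent transposition between two consecutive
  patterns links the two blocks.\<close>

definition block :: "nat \<Rightarrow> nat \<Rightarrow> nat list \<Rightarrow> nat list list" where
  "block m j \<sigma> = (let a = m + 1; b = m + 2; c = m + 3 in
     if j = 0 then nested_zigzag a b c True True True \<sigma>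
     else if j = 1 then twisted_zigzag b c a False \<sigma>
     else if j = 2 then rev (nested_zigzag a c b True True True \<sigma>)
     else if j = 3 then twisted_zigzag a c b True \<sigma>
     else if j = 4 then nested_zigzag c a b True True True \<sigma>
     else if j = 5 then twisted_zigzag a b c False \<sigma>
     else if j = 6 then nested_zigzag b a c True True False \<sigma>
     else if odd j then nested_zigzag a b c True False False \<sigma>
     else rev (nested_zigzag a b c True False False \<sigma>))"

definition junction :: "nat \<Rightarrow> nat \<Rightarrow> nat list \<times> nat list" where
  "junction m j = (let a = m + 1; b = m + 2; c = m + 3 in
     if j = 0 then ([a], [b, c])
     else if j = 1 then ([a], [c, b])
     else if j = 2 then ([], [a, c, b])
     else if j = 3 then ([], [c, a, b])
     else if j = 4 then ([c], [a, b])
     else if j = 5 then ([c], [b, a])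
     else if j = 6 then ([c, b], [a])
     else if odd j then ([c, b, a], [])
     else ([c, b], [a]))"

lemma pattern_path_block:
  assumes "is_perm_word m \<sigma>" "odd m"
  shows "pattern_path m \<sigma> (block m j \<sigma>)"
proof -
  note nested = pattern_path_nested_zigzag[OF assms(1)]
    and twisted = pattern_path_twisted_zigzag[OF assms]
  show ?thesis
    unfolding block_def Let_def
    by (auto intro!: nested twisted pattern_path_rev)
qed

lemma hd_block_0: "length \<sigma> = m \<Longrightarrow> hd (block m 0 \<sigma>) = \<sigma> @ [m + 1, m + 2, m + 3]"
  unfolding block_def by (simp add: hd_nested_zigzag insert_at_length)

lemma last_block:
  assumes "length \<sigma> = m" "odd m"
  shows "last (block m j \<sigma>) = fst (junction m j) @ \<sigma> @ snd (junction m j)"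
  unfolding block_def junction_def Let_def
  using assms by (simp add: last_nested_zigzag hd_nested_zigzag last_twisted_zigzag last_rev insert_at_length)

lemma hd_block_Suc:
  assumes "length \<sigma> = m" "odd m"
  shows "hd (block m (Suc j) \<sigma>) = fst (junction m j) @ \<sigma> @ snd (junction m j)"
  unfolding block_def junction_def Let_def
  using assms by (simp add: last_nested_zigzag hd_nested_zigzag hd_twisted_zigzag hd_rev insert_at_length)

lemma adj_transp_block_junction:
  assumes "length \<sigma> = m" "odd m" "adj_transp \<sigma> \<sigma>'"
  shows "adj_transp (last (block m j \<sigma>)) (hd (block m (Suc j) \<sigma>'))"
  using last_block[OF assms(1,2)] hd_block_Suc[of \<sigma>' m j] adj_transp_length[OF assms(3)] assms
    adj_transp_append
  by simp

lemma nested_zigzag_suffix: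
  assumes "odd (length \<sigma>)"
  obtains pre where "nested_zigzag x y z True False False \<sigma> =
    pre @ map (\<lambda>p. insert_at p z (y # x # \<sigma>)) (sweep (length \<sigma> + 3) True)"
proof -
  let ?G1 = "zigzag 0 True x [\<sigma>]"
  let ?G2 = "zigzag 0 False y ?G1"
  have l1: "\<forall>g\<in>set ?G1. length g = Suc (length \<sigma>)"
    by (auto elim: in_set_zigzagE)
  have "length ?G2 = Suc (length \<sigma>) * Suc (Suc (length \<sigma>))"
    unfolding length_zigzag[OF l1] by simp
  then have G2: "?G2 \<noteq> []" "odd (length (butlast ?G2))"
    using assms by (auto simp del: zigzag.simps)
  \<comment> \<open>\<open>?G2\<close> has even length and ends with \<open>y # x # \<sigma>\<close>, which \<open>z\<close> therefore sweeps from right to left\<close>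
  have "last ?G2 = y # x # \<sigma>"
    using last_zigzag[of ?G1 0 False y] assms by (simp add: last_map_sweep)
  moreover have "nested_zigzag x y z True False False \<sigma> =
      zigzag 0 False z (butlast ?G2) @ zigzag 0 True z [last ?G2]"
    unfolding nested_zigzag_def
    by (subst append_butlast_last_id[OF G2(1), symmetric]) (use G2(2) in \<open>simp only: zigzag_append if_False not_False_eq_True\<close>)
  moreover have "zigzag 0 True z [y # x # \<sigma>] = map (\<lambda>p. insert_at p z (y # x # \<sigma>)) (sweep (length \<sigma> + 3) True)"
    by (simp add: numeral_eq_Suc)
  ultimately show ?thesis
    using that by (simp del: zigzag.simps)
qed

lemma perm_word_in_set:
  assumes "distinct L" "length L = fact m" "\<forall>w\<in>set L. is_perm_word m w" "is_perm_word m w"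
  shows "w \<in> set L"
proof -
  have perms: "{w. is_perm_word m w} = permutations_of_set {1..m}"
    by (auto simp: is_perm_word_def permutations_of_set_def)
  have "card (set L) = card (permutations_of_set {1..m})"
    using assms(1,2) by (simp add: distinct_card)
  then have "set L = permutations_of_set {1..m}"
    using assms(3) perms by (intro card_subset_eq) auto
  then show ?thesis
    using assms(4) perms by blast
qed

lemma reverse_gray_code_append_rev:
  assumes "2 * length H = fact n" "distinct H" "\<forall>w\<in>set H. is_perm_word n w"
    and "successively adj_transp H" "\<forall>w\<in>set H. rev w \<notin> set H"
    and "H \<noteq> []" "adj_transp (last H) (rev (hd H))"
  shows "reverse_gray_code n (H @ map rev H)"
proof -
  let ?L = "H @ map rev H"
  have half: "fact n div 2 = length H"
    using assms(1) by simp
  have "distinct ?L"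
    using assms(2,5) by (auto simp: distinct_map)
  moreover have "\<forall>w\<in>set ?L. is_perm_word n w"
    using assms(3) by (auto simp: is_perm_word_def)
  moreover have "successively adj_transp (map rev H)"
    unfolding successively_map using assms(4) by (rule successively_mono) (rule adj_transp_rev)
  then have "successively adj_transp ?L"
    using assms(4,6,7) by (simp add: successively_append_iff hd_map)
  ultimately show ?thesis
    unfolding reverse_gray_code_def half successively_conv_nth
    using assms(1) perm_word_in_set[of ?L n] by (auto simp: nth_append)
qed

lemma fact_eq_twice_half: "2 \<le> m \<Longrightarrow> (fact m :: nat) = 2 * (fact m div 2)"
  using dvd_fact[of 2 m] by simp

lemma half_factE:
  assumes "2 \<le> m"
  obtains h :: nat where "fact m div 2 = h" "fact m = 2 * h" "0 < h"
proof
  show "(fact m :: nat) = 2 * (fact m div 2)" "0 < (fact m div 2 :: nat)"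
    using fact_eq_twice_half[OF assms] fact_ge_1[of m, where 'a = nat] by linarith+
qed simp

lemma reverse_gray_code_perm_word: "reverse_gray_code m L \<Longrightarrow> j < fact m \<Longrightarrow> is_perm_word m (L ! j)"
  unfolding reverse_gray_code_def by auto

lemma reverse_gray_code_adj_transp:
  "reverse_gray_code m L \<Longrightarrow> Suc j < fact m \<Longrightarrow> adj_transp (L ! j) (L ! Suc j)"
  unfolding reverse_gray_code_def by auto

lemma reverse_gray_code_rev:
  "reverse_gray_code m L \<Longrightarrow> j < fact m div 2 \<Longrightarrow> L ! (j + fact m div 2) = rev (L ! j)"
  unfolding reverse_gray_code_def by auto

lemma reverse_gray_code_nth_inject:
  "reverse_gray_code m L \<Longrightarrow> i < fact m \<Longrightarrow> j < fact m \<Longrightarrow> L ! i = L ! j \<Longrightarrow> i = j"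
  unfolding reverse_gray_code_def by (simp add: nth_eq_iff_index_eq)

section \<open>The first half of the new code\<close>

lemma length_concat_map_upt:
  "(\<forall>j<N. length (f j) = B) \<Longrightarrow> length (concat (map f [0..<N])) = N * B"
  by (induction N) auto

lemma distinct_concat_map_upt:
  "(\<forall>j<N. distinct (f j)) \<Longrightarrow> (\<forall>i j. i < j \<longrightarrow> j < N \<longrightarrow> set (f i) \<inter> set (f j) = {}) \<Longrightarrow>
   distinct (concat (map f [0..<N]))"
proof (induction N)
  case (Suc N)
  then have "\<forall>i<N. set (f i) \<inter> set (f N) = {}"
    by blast
  then have "set (concat (map f [0..<N])) \<inter> set (f N) = {}"
    by auto
  then show ?case
    using Suc by simp
qed simp

lemma successively_concat_map_upt:
  "(\<forall>j<N. f j \<noteq> [] \<and> successively R (f j)) \<Longrightarrow> (\<forall>j. Suc j < N \<longrightarrow> R (last (f j)) (hd (f (Suc j)))) \<Longrightarrow>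
   successively R (concat (map f [0..<N]))"
proof (induction N)
  case (Suc N)
  show ?case
  proof (cases N)
    case (Suc N')
    then have "concat (map f [0..<N]) \<noteq> []" "last (concat (map f [0..<N])) = last (f N')"
      using Suc.prems by simp_all
    then show ?thesis
      using Suc.IH Suc.prems \<open>N = Suc N'\<close> by (auto simp: successively_append_iff)
  qed (use Suc.prems in simp)
qed simp

definition half_code :: "nat \<Rightarrow> nat list list \<Rightarrow> nat list list" where
  "half_code m S = concat (map (\<lambda>j. block m j (S ! j)) [0..<fact m div 2])"

context
  fixes m :: nat and S :: "nat list list"
  assumes code: "reverse_gray_code m S" and odd_m: "odd m" and m_ge_5: "5 \<le> m"
begin

lemma half_fact: "(fact m :: nat) = 2 * (fact m div 2)" "even (fact m div 2 :: nat)" "8 \<le> (fact m div 2 :: nat)"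
proof -
  show "(fact m :: nat) = 2 * (fact m div 2)"
    using fact_eq_twice_half m_ge_5 by simp
  have "(4::nat) dvd fact m"
    using m_ge_5 by (intro dvd_fact) auto
  then show "even (fact m div 2 :: nat)"
    by auto
  have "fact 5 \<le> (fact m :: nat)"
    using m_ge_5 by (rule fact_mono_nat)
  then show "8 \<le> (fact m div 2 :: nat)"
    by (simp add: fact_numeral)
qed

lemma pattern_path_half_block: "(j::nat) < fact m div 2 \<Longrightarrow> pattern_path m (S ! j) (block m j (S ! j))"
  using reverse_gray_code_perm_word[OF code] half_fact(1) odd_m
  by (intro pattern_path_block) auto

lemma in_set_half_code:
  assumes "w \<in> set (half_code m S)"
  obtains j :: nat where "j < fact m div 2" "is_perm_word (m + 3) w" "filter (\<lambda>k. k \<le> m) w = S ! j"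
  using assms pattern_path_half_block unfolding half_code_def pattern_path_def by auto

lemma length_half_code: "2 * length (half_code m S) = fact (m + 3)"
proof -
  have "length (half_code m S) = fact m div 2 * ((m + 1) * (m + 2) * (m + 3))"
    unfolding half_code_def
    by (rule length_concat_map_upt) (use pattern_path_half_block in \<open>auto simp: pattern_path_def\<close>)
  moreover have "fact (m + 3) = fact m * ((m + 1) * (m + 2) * (m + 3))"
    by (simp add: numeral_eq_Suc algebra_simps)
  ultimately show ?thesis
    using half_fact(1) by (metis mult.assoc)
qed

lemma distinct_half_code: "distinct (half_code m S)"
  unfolding half_code_def
proof (rule distinct_concat_map_upt)
  show "\<forall>j<fact m div 2. distinct (block m j (S ! j))"
    using pattern_path_half_block by (simp add: pattern_path_def)
  show "\<forall>i j. i < j \<longrightarrow> j < fact m div 2 \<longrightarrow> set (block m i (S ! i)) \<inter> set (block m j (S ! j)) = {}"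
  proof (intro allI impI)
    fix i j :: nat
    assume ij: "i < j" "j < fact m div 2"
    have "S ! i \<noteq> S ! j"
      using reverse_gray_code_nth_inject[OF code, of i j] ij half_fact(1) by auto
    then show "set (block m i (S ! i)) \<inter> set (block m j (S ! j)) = {}"
      using pattern_path_half_block[of i] pattern_path_half_block[of j] ij
      unfolding pattern_path_def by fastforce
  qed
qed

lemma successively_half_code: "successively adj_transp (half_code m S)"
  unfolding half_code_def
proof (rule successively_concat_map_upt)
  show "\<forall>j<fact m div 2. block m j (S ! j) \<noteq> [] \<and> successively adj_transp (block m j (S ! j))"
    using pattern_path_half_block pattern_path_nonempty unfolding pattern_path_def by blast
  show "\<forall>j. Suc j < fact m div 2 \<longrightarrow> adj_transp (last (block m j (S ! j))) (hd (block m (Suc j) (S ! Suc j)))"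
  proof (intro allI impI)
    fix j
    assume "Suc j < fact m div 2"
    then have "adj_transp (S ! j) (S ! Suc j)" "length (S ! j) = m"
      using reverse_gray_code_adj_transp[OF code] reverse_gray_code_perm_word[OF code, of j] length_perm_word half_fact(1) by auto
    then show "adj_transp (last (block m j (S ! j))) (hd (block m (Suc j) (S ! Suc j)))"
      using adj_transp_block_junction odd_m by blast
  qed
qed

lemma rev_notin_half_code:
  assumes "w \<in> set (half_code m S)"
  shows "rev w \<notin> set (half_code m S)"
proof
  assume "rev w \<in> set (half_code m S)"
  then obtain i where i: "i < fact m div 2" "filter (\<lambda>k. k \<le> m) (rev w) = S ! i"
    by (rule in_set_half_code)
  obtain j where j: "j < fact m div 2" "filter (\<lambda>k. k \<le> m) w = S ! j"
    using assms by (rule in_set_half_code)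
  have "S ! i = rev (S ! j)"
    using i(2) j(2) by (metis rev_filter)
  also have "\<dots> = S ! (j + fact m div 2)"
    using reverse_gray_code_rev[OF code] j(1) by simp
  finally show False
    using reverse_gray_code_nth_inject[OF code, of i "j + fact m div 2"] i(1) j(1) half_fact(1) by linarith
qed

lemma hd_half_code: "hd (half_code m S) = S ! 0 @ [m + 1, m + 2, m + 3]"
proof -
  have "block m 0 (S ! 0) \<noteq> []"
    using pattern_path_half_block[of 0] pattern_path_nonempty half_fact(2,3) by simp
  moreover have "length (S ! 0) = m"
    using reverse_gray_code_perm_word[OF code, of 0] length_perm_word half_fact by simp
  ultimately show ?thesis
    unfolding half_code_def using half_fact(2,3) hd_block_0[of "S ! 0" m]
    by (simp add: upt_conv_Cons del: upt_Suc)
qed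

lemma half_code_suffix:
  obtains pre where "half_code m S =
    pre @ map (\<lambda>p. insert_at p (m + 3) ((m + 2) # (m + 1) # S ! (fact m div 2 - 1))) (sweep (m + 3) True)"
proof -
  define h' :: nat where "h' = fact m div 2 - 1"
  have h': "fact m div 2 = Suc h'" "odd h'" "7 \<le> h'" "h' < fact m"
    using half_fact unfolding h'_def by auto
  then have "block m h' (S ! h') = nested_zigzag (m + 1) (m + 2) (m + 3) True False False (S ! h')"
    unfolding block_def by simp
  moreover have "length (S ! h') = m"
    using reverse_gray_code_perm_word[OF code, of h'] length_perm_word h' by simp
  ultimately obtain pre where
    "block m h' (S ! h') = pre @ map (\<lambda>p. insert_at p (m + 3) ((m + 2) # (m + 1) # S ! h')) (sweep (m + 3) True)"
    using nested_zigzag_suffix[of "S ! h'"] odd_m by metis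
  then show ?thesis
    using that[of "concat (map (\<lambda>j. block m j (S ! j)) [0..<h']) @ pre"]
    unfolding half_code_def h'(1) h'_def[symmetric] by simp
qed

lemma reverse_gray_code_mirrored_half_code:
  "reverse_gray_code (m + 3) (half_code m S @ map rev (half_code m S))"
proof (rule reverse_gray_code_append_rev)
  let ?H = "half_code m S" and ?h = "fact m div 2"
  show "2 * length ?H = fact (m + 3)"
    by (rule length_half_code)
  then show "?H \<noteq> []"
    by auto
  show "\<forall>w\<in>set ?H. is_perm_word (m + 3) w"
    by (auto elim: in_set_half_code)
  obtain pre where pre: "?H = pre @ map (\<lambda>p. insert_at p (m + 3) ((m + 2) # (m + 1) # S ! (?h - 1))) (sweep (m + 3) True)"
    by (rule half_code_suffix)
  have "last ?H = [m + 3, m + 2, m + 1] @ S ! (?h - 1)"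
    by (subst pre) (simp add: last_map_sweep)
  moreover have "rev (hd ?H) = [m + 3, m + 2, m + 1] @ S ! ?h"
    using reverse_gray_code_rev[OF code, of 0] half_fact(2,3) by (simp add: hd_half_code)
  moreover have "adj_transp (S ! (?h - 1)) (S ! ?h)"
    using reverse_gray_code_adj_transp[OF code, of "?h - 1"] half_fact by simp
  ultimately show "adj_transp (last ?H) (rev (hd ?H))"
    by (simp add: adj_transp_append[of _ _ "[m + 3, m + 2, m + 1]" "[]", simplified])
qed (use distinct_half_code successively_half_code rev_notin_half_code in auto)

lemma property_P_mirrored_half_code:
  assumes "S ! 0 = [1..<Suc m]" "S ! (fact m div 2 - 1) = m # P_base m"
  shows "property_P (m + 3) (half_code m S @ map rev (half_code m S))"
  unfolding property_P_def
proof (intro conjI allI impI)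
  let ?H = "half_code m S"
  have "?H \<noteq> []"
    using length_half_code by auto
  then show "(?H @ map rev ?H) ! 0 = [1..<Suc (m + 3)]"
    using hd_half_code assms(1) by (simp add: hd_conv_nth[symmetric] nth_append numeral_eq_Suc)
  fix k :: nat
  assume "k < 4"
  let ?f = "\<lambda>p. insert_at p (m + 3) ((m + 2) # (m + 1) # m # P_base m)"
  obtain pre where pre: "?H = pre @ map ?f (sweep (m + 3) True)"
    using half_code_suffix assms(2) by metis
  have half: "fact (m + 3) div 2 = length ?H"
    using length_half_code by simp
  have "length ?H = length pre + (m + 3)"
    by (subst pre) simp
  then have "fact (m + 3) div 2 - 1 - k = length pre + (m + 2 - k)" "length pre + (m + 2 - k) < length ?H"
    unfolding half using \<open>k < 4\<close> m_ge_5 by linarith+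
  then have "(?H @ map rev ?H) ! (fact (m + 3) div 2 - 1 - k) = ?H ! (length pre + (m + 2 - k))"
    by (simp add: nth_append_left)
  also have "\<dots> = map ?f (sweep (m + 3) True) ! (m + 2 - k)"
    by (subst pre) (rule nth_append_length_plus)
  also have "\<dots> = ?f (rev [0..<m + 3] ! (m + 2 - k))"
    using \<open>k < 4\<close> m_ge_5 by (simp add: sweep_def)
  also have "rev [0..<m + 3] ! (m + 2 - k) = k"
    using \<open>k < 4\<close> m_ge_5 by (subst rev_nth) auto
  also have "(m + 2) # (m + 1) # m # P_base m = P_base (m + 3)"
    using m_ge_5 by (simp add: P_base_def numeral_eq_Suc upt_conv_Cons)
  finally show "(?H @ map rev ?H) ! (fact (m + 3) div 2 - 1 - k) = take k (P_base (m + 3)) @ (m + 3) # drop k (P_base (m + 3))"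
    by (simp add: insert_at_def)
qed

end

section \<open>Normalising a reverse Gray code\<close>

definition swap_last_two :: "'a list \<Rightarrow> 'a list" where
  "swap_last_two w = w[length w - 2 := w ! (length w - 1), length w - 1 := w ! (length w - 2)]"

lemma last_adj_transp:
  assumes "adj_transp w v" "v \<noteq> swap_last_two w"
  shows "last v = last w"
proof -
  obtain i where i: "Suc i < length w" "v = w[i := w ! Suc i, Suc i := w ! i]"
    using assms(1) by (auto simp: adj_transp_def)
  have "i \<noteq> length w - 2"
    using assms(2) i unfolding swap_last_two_def by (auto simp: Suc_diff_Suc numeral_2_eq_2)
  then have "v ! (length w - 1) = w ! (length w - 1)"
    using i by (simp add: nth_list_update)
  moreover have "w \<noteq> []" "v \<noteq> []" "length v = length w"
    using i by auto
  ultimately show ?thesis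
    by (simp add: last_conv_nth)
qed

lemma map_swap_last_two: "map f (swap_last_two w) = swap_last_two (map f w)"
  unfolding swap_last_two_def by (cases "w = []") (simp_all add: map_update)

lemma swap_last_two_swap_last_two: "swap_last_two (swap_last_two w) = w"
  unfolding swap_last_two_def by (rule nth_equalityI) (auto simp: nth_list_update)

lemma swap_last_two_rev_upt:
  assumes "3 \<le> m"
  shows "swap_last_two (rev [1..<Suc m]) = m # P_base m"
proof -
  have "[1..<Suc m] = [1, 2] @ [3..<m] @ [m]"
    using assms upt_add_eq_append[of 1 3 "m - 2"] by (simp add: numeral_3_eq_3 upt_conv_Cons)
  then have "rev [1..<Suc m] = (m # rev [3..<m]) @ [2, 1]"
    by simp
  moreover have "swap_last_two ((m # rev [3..<m]) @ [2, 1]) = (m # rev [3..<m]) @ [1, 2]"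
    unfolding swap_last_two_def by (simp add: list_update_append nth_append)
  ultimately show ?thesis
    by (simp add: P_base_def)
qed

text \<open>If no step of the first half swapped the last two symbols, the last symbol would stay put
  along the first half; but the word in the middle, the reversal of the first word, ends with
  the first symbol of the first word.\<close>

lemma exists_swap_last_two:
  assumes code: "reverse_gray_code m L" and "2 \<le> m"
  shows "\<exists>j < fact m div 2. L ! Suc j = swap_last_two (L ! j)"
proof (rule ccontr)
  assume no_swap: "\<not> ?thesis"
  obtain h :: nat where h: "fact m div 2 = h" and K: "fact m = 2 * h" "0 < h"
    using assms(2) by (rule half_factE)
  have last_const: "last (L ! j) = last (L ! 0)" if "j \<le> h" for j
    using that
  proof (induction j)
    case (Suc j)
    have "j < h" "Suc j < fact m"
      using Suc.prems K by linarith+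
    then have "adj_transp (L ! j) (L ! Suc j)" "L ! Suc j \<noteq> swap_last_two (L ! j)"
      using reverse_gray_code_adj_transp[OF code] no_swap h by auto
    then show ?case
      using last_adj_transp Suc by simp
  qed simp
  have "L ! h = rev (L ! 0)"
    using reverse_gray_code_rev[OF code, of 0] K(2) h by simp
  then have "hd (L ! 0) = last (L ! 0)"
    using last_const[of h] by (simp add: last_rev)
  moreover have "distinct (L ! 0)" "length (L ! 0) = m"
    using reverse_gray_code_perm_word[OF code, of 0] K(2) length_perm_word
    unfolding is_perm_word_def by auto
  ultimately show False
    using assms(2) by (cases "L ! 0") (auto split: if_splits)
qed

lemma reverse_gray_code_rev_mod:
  assumes code: "reverse_gray_code m L" and "2 \<le> m" and "i < fact m"
  shows "L ! ((i + fact m div 2) mod fact m) = rev (L ! i)"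
proof -
  obtain h :: nat where h: "fact m div 2 = h" and K: "fact m = 2 * h" "0 < h"
    using assms(2) by (rule half_factE)
  show ?thesis
  proof (cases "i < h")
    case True
    then show ?thesis
      using reverse_gray_code_rev[OF code, of i] K h by simp
  next
    case False
    then have "(i + h) mod fact m = i - h" "i - h < h"
      using assms(3) K by (simp_all add: mod_if)
    moreover have "L ! i = rev (L ! (i - h))"
      using reverse_gray_code_rev[OF code, of "i - h"] False \<open>i - h < h\<close> h by simp
    ultimately show ?thesis
      using h by simp
  qed
qed

lemma reverse_gray_code_adj_transp_mod:
  assumes code: "reverse_gray_code m L" and "2 \<le> m" and "i < fact m"
  shows "adj_transp (L ! i) (L ! (Suc i mod fact m))"
proof (cases "Suc i < fact m")
  case True
  then show ?thesis
    using reverse_gray_code_adj_transp[OF code] by simp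
next
  case False
  obtain h :: nat where h: "fact m div 2 = h" and K: "fact m = 2 * h" "0 < h"
    using assms(2) by (rule half_factE)
  \<comment> \<open>the last word is the reversal of the word before the middle, the first word that of the middle one\<close>
  have "Suc i = fact m"
    using False assms(3) by simp
  then have i: "i = (h - 1) + h" "Suc i mod fact m = 0"
    using K by auto
  have "adj_transp (L ! (h - 1)) (L ! h)"
    using reverse_gray_code_adj_transp[OF code, of "h - 1"] K by simp
  moreover have "L ! i = rev (L ! (h - 1))" "L ! h = rev (L ! 0)"
    using reverse_gray_code_rev[OF code, of "h - 1"] reverse_gray_code_rev[OF code, of 0] i(1) K h
    by simp_all
  ultimately show ?thesis
    using adj_transp_rev i(2) by fastforce
qed

lemma reverse_gray_code_rotate:
  assumes code: "reverse_gray_code m L" and "2 \<le> m"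
  shows "reverse_gray_code m (rotate s L)"
proof -
  have len: "length L = fact m"
    using code unfolding reverse_gray_code_def by simp
  have nth: "rotate s L ! i = L ! ((s + i) mod fact m)" if "i < fact m" for i
    using nth_rotate[of i L s] that len by simp
  have "adj_transp (rotate s L ! i) (rotate s L ! Suc i)" if "Suc i < fact m" for i
    using reverse_gray_code_adj_transp_mod[OF code assms(2), of "(s + i) mod fact m"] that
    by (simp add: nth mod_Suc_eq)
  moreover have "rotate s L ! (i + fact m div 2) = rev (rotate s L ! i)" if "i < fact m div 2" for i
    using reverse_gray_code_rev_mod[OF code assms(2), of "(s + i) mod fact m"] that
      fact_eq_twice_half[OF assms(2)]
    by (simp add: nth mod_add_left_eq add.assoc)
  ultimately show ?thesis
    using code len unfolding reverse_gray_code_def by simp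
qed

lemma reverse_gray_code_relabel:
  assumes code: "reverse_gray_code m L" and bij: "bij_betw \<tau> {1..m} {1..m}"
  shows "reverse_gray_code m (map (map \<tau>) L)"
proof -
  let ?R = "map (map \<tau>) L"
  have words: "\<forall>w\<in>set L. is_perm_word m w" and len: "length L = fact m"
    using code unfolding reverse_gray_code_def by auto
  then have "\<forall>w\<in>set ?R. is_perm_word m w"
    using bij unfolding is_perm_word_def bij_betw_def by (auto simp: distinct_map inj_on_subset)
  moreover have "inj_on (map \<tau>) (set L)"
  proof (rule inj_onI)
    fix v w
    assume "v \<in> set L" "w \<in> set L" "map \<tau> v = map \<tau> w"
    moreover have "inj_on \<tau> (set v \<union> set w)"
      using calculation words bij unfolding is_perm_word_def bij_betw_def by auto
    ultimately show "v = w"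
      using map_inj_on by blast
  qed
  then have "distinct ?R"
    using code unfolding reverse_gray_code_def by (simp add: distinct_map)
  ultimately show ?thesis
    using code len perm_word_in_set[of ?R m]
    unfolding reverse_gray_code_def by (auto simp: adj_transp_map rev_map)
qed

lemma relabel_to_upt:
  assumes "is_perm_word m \<sigma>"
  obtains \<tau> where "bij_betw \<tau> {1..m} {1..m}" "map \<tau> \<sigma> = [1..<Suc m]"
proof
  have \<sigma>: "distinct \<sigma>" "set \<sigma> = {1..m}" "length \<sigma> = m"
    using assms length_perm_word unfolding is_perm_word_def by auto
  then have nth: "bij_betw ((!) \<sigma>) {..<m} {1..m}"
    using bij_betw_nth[OF \<sigma>(1)] by simp
  let ?\<tau> = "\<lambda>x. Suc (the_inv_into {..<m} ((!) \<sigma>) x)"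
  have "bij_betw Suc {..<m} {1..m}"
    by (simp add: bij_betw_def image_Suc_lessThan)
  then show "bij_betw ?\<tau> {1..m} {1..m}"
    using bij_betw_trans[OF bij_betw_the_inv_into[OF nth]] by (simp only: comp_def)
  show "map ?\<tau> \<sigma> = [1..<Suc m]"
    using \<sigma> nth by (intro nth_equalityI) (auto simp: bij_betw_def the_inv_into_f_f simp del: upt_Suc)
qed

lemma exists_rotation_swap_last_two_middle:
  assumes code: "reverse_gray_code m L" and "2 \<le> m"
  obtains R where "reverse_gray_code m R" "R ! (fact m div 2) = swap_last_two (R ! (fact m div 2 - 1))"
proof -
  obtain h :: nat where h: "fact m div 2 = h" and K: "fact m = 2 * h" "0 < h"
    using assms(2) by (rule half_factE)
  obtain j where j: "j < h" "L ! Suc j = swap_last_two (L ! j)"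
    using exists_swap_last_two[OF assms] h by blast
  define s where "s = Suc j + h"
  have len: "length L = 2 * h"
    using code K unfolding reverse_gray_code_def by simp
  have "(s + (h - 1)) mod (2 * h) = j" "(s + h) mod (2 * h) = Suc j"
    using j K unfolding s_def by (simp_all add: mod_if)
  then have "rotate s L ! (h - 1) = L ! j" "rotate s L ! h = L ! Suc j"
    using nth_rotate[of "h - 1" L s] nth_rotate[of h L s] len K by simp_all
  then show ?thesis
    using that[OF reverse_gray_code_rotate[OF assms, of s]] j(2) h by simp
qed

lemma normalized_reverse_gray_code:
  assumes code: "reverse_gray_code m L" and "3 \<le> m"
  obtains S where "reverse_gray_code m S" "S ! 0 = [1..<Suc m]" "S ! (fact m div 2 - 1) = m # P_base m"
proof -
  have m: "2 \<le> m"
    using assms(2) by simp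
  obtain h :: nat where h: "fact m div 2 = h" and K: "fact m = 2 * h" "0 < h"
    using m by (rule half_factE)
  obtain R where R: "reverse_gray_code m R" "R ! h = swap_last_two (R ! (h - 1))"
    using exists_rotation_swap_last_two_middle[OF code m] h by metis
  obtain \<tau> where \<tau>: "bij_betw \<tau> {1..m} {1..m}" "map \<tau> (R ! 0) = [1..<Suc m]"
    using relabel_to_upt[OF reverse_gray_code_perm_word[OF R(1), of 0]] by auto
  let ?S = "map (map \<tau>) R"
  have S: "reverse_gray_code m ?S"
    using R(1) \<tau>(1) by (rule reverse_gray_code_relabel)
  have lenR: "length R = 2 * h"
    using R(1) K unfolding reverse_gray_code_def by simp
  have S0: "?S ! 0 = [1..<Suc m]"
    using \<tau>(2) lenR K by simp
  have "?S ! h = rev [1..<Suc m]"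
    using reverse_gray_code_rev[OF S, of 0] S0 K h by simp
  moreover have "?S ! h = swap_last_two (?S ! (h - 1))"
    using R(2) lenR K by (simp add: map_swap_last_two)
  ultimately have "?S ! (h - 1) = m # P_base m"
    using swap_last_two_swap_last_two swap_last_two_rev_upt[OF assms(2)] by metis
  then show ?thesis
    using that[OF S S0] h by simp
qed

theorem theorem8:
  fixes n :: nat
  assumes "n mod 4 = 0" and "n \<ge> 8"
    and "\<exists>L. reverse_gray_code (n - 3) L"
  shows "\<exists>L. reverse_gray_code n L \<and> property_P n L"
proof -
  define m where "m = n - 3"
  have n: "n = m + 3" and m: "odd m" "5 \<le> m"
    using assms(1,2) unfolding m_def by presburger+
  obtain L where "reverse_gray_code m L"
    using assms(3) unfolding m_def by blast
  moreover have "3 \<le> m"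
    using m(2) by simp
  ultimately obtain S where S: "reverse_gray_code m S" "S ! 0 = [1..<Suc m]" "S ! (fact m div 2 - 1) = m # P_base m"
    by (rule normalized_reverse_gray_code)
  let ?L = "half_code m S @ map rev (half_code m S)"
  have "reverse_gray_code (m + 3) ?L" "property_P (m + 3) ?L"
    using reverse_gray_code_mirrored_half_code[OF S(1) m]
      property_P_mirrored_half_code[OF S(1) m S(2,3)] by auto
  then show ?thesis
    unfolding n by blast
qed

end
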